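(* The ranges of $\mathcal{A}_1$ and $\mathcal{A}_2$ coincide: $\{\mathcal{A}_1(\nu):\nu\in\mathfrak{M}_L^1(\mathbb{R}^d)\}=\{\mathcal{A}_2(\nu):\nu\in\mathfrak{M}_L^2(\mathbb{R}^d)\}$.
   Context: A Lévy measure on $\mathbb{R}^d$ is a measure $\nu$ with $\nu(\{0\})=0$ and $\int(1\wedge|x|^2)\nu(\mathrm{d}x)<\infty$; their class is $\mathfrak{M}_L^2(\mathbb{R}^d)$, and $\mathfrak{M}_L^1(\mathbb{R}^d)$ is the class of Lévy measures with $\int(1\wedge|x|)\nu(\mathrm{d}x)<\infty$. For $s>0$ set $a_1(r;s)=2\pi^{-1}(s-r^2)^{-1/2}$ for $0<r<s^{1/2}$ and $0$ otherwise; $a_2(r;s)=2\pi^{-1}(s^2-r^2)^{-1/2}$ for $0<r<s$ and $0$ otherwise. For $k=1,2$, $\mathcal{A}_k(\nu)(B)=\int_{\mathbb{R}^d\setminus\{0\}}\nu(\mathrm{d}x)\int_0^\infty a_k(r;|x|)1_B(rx/|x|)\,\mathrm{d}r$, $B$ Borel; its domain (measures mapped to Lévy measures) is $\mathfrak{M}_L^k(\mathbb{R}^d)$. *)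

theory Defs
  imports "HOL-Analysis.Analysis"
begin

definition levy_measures_2 :: "('a::euclidean_space) measure set" where
  "levy_measures_2 = {\<nu>. sets \<nu> = sets borel \<and> emeasure \<nu> {0} = 0 \<and>
      (\<integral>\<^sup>+ x. ennreal (min 1 (norm x ^ 2)) \<partial>\<nu>) < \<infinity>}"

definition levy_measures_1 :: "('a::euclidean_space) measure set" where
  "levy_measures_1 = {\<nu>. sets \<nu> = sets borel \<and> emeasure \<nu> {0} = 0 \<and>
      (\<integral>\<^sup>+ x. ennreal (min 1 (norm x)) \<partial>\<nu>) < \<infinity>}"

definition a1 :: "real \<Rightarrow> real \<Rightarrow> real" where
  "a1 r s = (if 0 < r \<and> r < sqrt s then 2 / pi * (s - r^2) powr (-1/2) else 0)"

definition a2 :: "real \<Rightarrow> real \<Rightarrow> real" where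
  "a2 r s = (if 0 < r \<and> r < s then 2 / pi * (s^2 - r^2) powr (-1/2) else 0)"

definition Atrans :: "(real \<Rightarrow> real \<Rightarrow> real) \<Rightarrow> ('a::euclidean_space) measure \<Rightarrow> 'a measure" where
  "Atrans a \<nu> = measure_of UNIV (sets borel)
     (\<lambda>B. \<integral>\<^sup>+ x. indicator (UNIV - {0}) x *
        (\<integral>\<^sup>+ r. indicator {0<..} r * ennreal (a r (norm x)) * indicator B (r *\<^sub>R (x /\<^sub>R norm x)) \<partial>lborel) \<partial>\<nu>)"

definition A1 :: "('a::euclidean_space) measure \<Rightarrow> 'a measure" where
  "A1 = Atrans a1"

definition A2 :: "('a::euclidean_space) measure \<Rightarrow> 'a measure" where
  "A2 = Atrans a2"

end

theory Submission
  imports Defs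
begin

text \<open>The radial square root x \<mapsto> sqrt|x| x/|x| keeps directions and turns the kernel
  a1(r;|x|) into a2(r;sqrt|x|), so A1(\<nu>) is A2 of the image of \<nu> under it. Since
  min(1,|y|^2) at y = sqrt|x| x/|x| is min(1,|x|), taking images under this map is a bijection
  from the Levy measures with finite first moment onto all Levy measures; its inverse takes
  images under the radial square y \<mapsto> |y| y.\<close>

lemma nn_integral_distr_borel:
  assumes sets: "sets M = sets borel"
    and \<phi>: "\<phi> \<in> borel_measurable borel" and f: "f \<in> borel_measurable borel"
  shows "(\<integral>\<^sup>+ y. f y \<partial>distr M borel \<phi>) = (\<integral>\<^sup>+ x. f (\<phi> x) \<partial>M)"
proof (rule nn_integral_distr)
  show "\<phi> \<in> measurable M borel"
    using measurable_cong_sets[OF sets refl] \<phi> by blast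
qed (use f in simp)

lemma emeasure_distr_zero:
  fixes \<phi> :: "'a::real_normed_vector \<Rightarrow> 'b::real_normed_vector"
  assumes sets: "sets \<nu> = sets borel" and \<phi>: "\<phi> \<in> borel_measurable borel"
    and zero_iff: "\<And>x. \<phi> x = 0 \<longleftrightarrow> x = 0"
  shows "emeasure (distr \<nu> borel \<phi>) {0} = emeasure \<nu> {0}"
proof -
  have "\<phi> -` {0} \<inter> space \<nu> = {0}"
    using sets_eq_imp_space_eq[OF sets] zero_iff by auto
  moreover have "\<phi> \<in> measurable \<nu> borel"
    using measurable_cong_sets[OF sets refl] \<phi> by blast
  ultimately show ?thesis
    by (simp add: emeasure_distr)
qed

lemma Atrans_distr:
  fixes \<nu> :: "'a::euclidean_space measure" and \<phi> :: "'a \<Rightarrow> 'a"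
  assumes sets: "sets \<nu> = sets borel"
    and \<phi>: "\<phi> \<in> borel_measurable borel"
    and [measurable]: "case_prod b \<in> borel_measurable borel"
    and zero_iff: "\<And>x. \<phi> x = 0 \<longleftrightarrow> x = 0"
    and direction: "\<And>x. x \<noteq> 0 \<Longrightarrow> sgn (\<phi> x) = sgn x"
    and kernel: "\<And>x r. x \<noteq> 0 \<Longrightarrow> a r (norm x) = b r (norm (\<phi> x))"
  shows "Atrans a \<nu> = Atrans b (distr \<nu> borel \<phi>)"
  unfolding Atrans_def
proof (rule measure_of_eq)
  show "sets borel \<subseteq> Pow UNIV" by simp
  fix B :: "'a set" assume "B \<in> sigma_sets UNIV (sets borel)"
  then have [measurable]: "B \<in> sets borel"
    using sets.sigma_sets_eq[of "borel :: 'a measure"] by simp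
  have [measurable]: "(\<lambda>x. b (f x) (g x)) \<in> borel_measurable M"
    if "f \<in> borel_measurable M" "g \<in> borel_measurable M" for f g and M :: "'b measure"
    using measurable_compose[OF measurable_Pair[OF that], of "case_prod b"]
    by (simp add: borel_prod)
  have integrand_meas: "(\<lambda>y. indicator (UNIV - {0}) y * (\<integral>\<^sup>+ r. indicator {0<..} r * ennreal (b r (norm y)) *
      indicator B (r *\<^sub>R (y /\<^sub>R norm y)) \<partial>lborel)) \<in> borel_measurable borel"
    by measurable
  have pointwise: "indicator (UNIV - {0}) x * (\<integral>\<^sup>+ r. indicator {0<..} r * ennreal (a r (norm x)) *
        indicator B (r *\<^sub>R (x /\<^sub>R norm x)) \<partial>lborel) =
      indicator (UNIV - {0}) (\<phi> x) * (\<integral>\<^sup>+ r. indicator {0<..} r * ennreal (b r (norm (\<phi> x))) *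
        indicator B (r *\<^sub>R (\<phi> x /\<^sub>R norm (\<phi> x))) \<partial>lborel)" for x
    using zero_iff[of x] direction[of x] kernel[of x] by (cases "x = 0") (simp_all add: sgn_div_norm)
  show "(\<integral>\<^sup>+ x. indicator (UNIV - {0}) x * (\<integral>\<^sup>+ r. indicator {0<..} r *
        ennreal (a r (norm x)) * indicator B (r *\<^sub>R (x /\<^sub>R norm x)) \<partial>lborel) \<partial>\<nu>) =
      (\<integral>\<^sup>+ y. indicator (UNIV - {0}) y * (\<integral>\<^sup>+ r. indicator {0<..} r *
        ennreal (b r (norm y)) * indicator B (r *\<^sub>R (y /\<^sub>R norm y)) \<partial>lborel) \<partial>distr \<nu> borel \<phi>)"
    unfolding nn_integral_distr_borel[OF sets \<phi> integrand_meas] pointwise ..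
qed

definition radial_sqrt :: "'a::real_normed_vector \<Rightarrow> 'a" where
  "radial_sqrt x = sqrt (norm x) *\<^sub>R sgn x"

definition radial_square :: "'a::real_normed_vector \<Rightarrow> 'a" where
  "radial_square y = norm y *\<^sub>R y"

lemma radial_sqrt_measurable [measurable]:
  "radial_sqrt \<in> borel_measurable (borel :: 'a::euclidean_space measure)"
  unfolding radial_sqrt_def by measurable

lemma radial_square_measurable [measurable]:
  "radial_square \<in> borel_measurable (borel :: 'a::euclidean_space measure)"
  unfolding radial_square_def by measurable

lemma norm_radial_sqrt [simp]: "norm (radial_sqrt x) = sqrt (norm x)"
  by (cases "x = 0") (simp_all add: radial_sqrt_def norm_sgn)

lemma norm_radial_square [simp]: "norm (radial_square y) = norm y ^ 2"
  by (simp add: radial_square_def power2_eq_square)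

lemma radial_sqrt_eq_0_iff: "radial_sqrt x = 0 \<longleftrightarrow> x = 0"
  by (metis norm_eq_zero norm_radial_sqrt real_sqrt_eq_zero_cancel_iff)

lemma radial_square_eq_0_iff: "radial_square y = 0 \<longleftrightarrow> y = 0"
  by (simp add: radial_square_def)

lemma sgn_radial_sqrt: "sgn (radial_sqrt x) = sgn x"
  by (cases "x = 0") (simp_all add: radial_sqrt_def sgn_scaleR norm_sgn sgn_div_norm[of "sgn x"])

lemma radial_sqrt_radial_square [simp]: "radial_sqrt (radial_square y) = y"
  by (cases "y = 0") (simp_all add: radial_sqrt_def radial_square_def sgn_scaleR sgn_div_norm norm_mult field_simps)

lemma A1_eq_A2_distr_radial_sqrt:
  fixes \<nu> :: "'a::euclidean_space measure"
  assumes "sets \<nu> = sets borel"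
  shows "A1 \<nu> = A2 (distr \<nu> borel radial_sqrt)"
  unfolding A1_def A2_def
proof (rule Atrans_distr[OF assms radial_sqrt_measurable])
  show "case_prod a2 \<in> borel_measurable borel"
    unfolding a2_def case_prod_beta power2_eq_square borel_prod[symmetric] by measurable
qed (simp_all add: radial_sqrt_eq_0_iff sgn_radial_sqrt a1_def a2_def)

lemma distr_radial_sqrt_levy_measures_2:
  assumes "\<nu> \<in> levy_measures_1"
  shows "distr \<nu> borel radial_sqrt \<in> (levy_measures_2 :: 'a::euclidean_space measure set)"
proof -
  have sets: "sets \<nu> = sets borel"
    using assms by (simp add: levy_measures_1_def)
  have "(\<integral>\<^sup>+ x. ennreal (min 1 (norm x ^ 2)) \<partial>distr \<nu> borel radial_sqrt) =
      (\<integral>\<^sup>+ x. ennreal (min 1 (norm x)) \<partial>\<nu>)"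
    by (subst nn_integral_distr_borel[OF sets radial_sqrt_measurable]) (simp_all, measurable)
  with assms show ?thesis
    by (simp add: levy_measures_1_def levy_measures_2_def emeasure_distr_zero radial_sqrt_eq_0_iff)
qed

lemma distr_radial_square_levy_measures_1:
  assumes "\<mu> \<in> levy_measures_2"
  shows "distr \<mu> borel radial_square \<in> (levy_measures_1 :: 'a::euclidean_space measure set)"
proof -
  have sets: "sets \<mu> = sets borel"
    using assms by (simp add: levy_measures_2_def)
  have "(\<integral>\<^sup>+ x. ennreal (min 1 (norm x)) \<partial>distr \<mu> borel radial_square) =
      (\<integral>\<^sup>+ x. ennreal (min 1 (norm x ^ 2)) \<partial>\<mu>)"
    by (subst nn_integral_distr_borel[OF sets radial_square_measurable]) (simp_all, measurable)
  with assms show ?thesis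
    by (simp add: levy_measures_1_def levy_measures_2_def emeasure_distr_zero radial_square_eq_0_iff)
qed

lemma distr_radial_sqrt_distr_radial_square:
  fixes \<mu> :: "'a::euclidean_space measure"
  assumes sets: "sets \<mu> = sets borel"
  shows "distr (distr \<mu> borel radial_square) borel radial_sqrt = \<mu>"
proof -
  have "distr (distr \<mu> borel radial_square) borel radial_sqrt = distr \<mu> borel (radial_sqrt \<circ> radial_square)"
    using measurable_cong_sets[OF sets refl] radial_square_measurable
    by (blast intro: distr_distr radial_sqrt_measurable)
  also have "\<dots> = distr \<mu> borel (\<lambda>x. x)"
    by (rule distr_cong) simp_all
  also have "\<dots> = \<mu>"
    using distr_id2[of borel \<mu>] sets by simp
  finally show ?thesis .
qed

lemma levy_measures_2_eq_image_distr_radial_sqrt: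
  "(levy_measures_2 :: 'a::euclidean_space measure set) =
    (\<lambda>\<nu>. distr \<nu> borel radial_sqrt) ` levy_measures_1"
proof
  show "(\<lambda>\<nu>. distr \<nu> borel radial_sqrt) ` levy_measures_1 \<subseteq> (levy_measures_2 :: 'a measure set)"
    using distr_radial_sqrt_levy_measures_2 by blast
  show "(levy_measures_2 :: 'a measure set) \<subseteq> (\<lambda>\<nu>. distr \<nu> borel radial_sqrt) ` levy_measures_1"
  proof
    fix \<mu> :: "'a measure" assume \<mu>: "\<mu> \<in> levy_measures_2"
    then have "\<mu> = distr (distr \<mu> borel radial_square) borel radial_sqrt"
      by (simp add: levy_measures_2_def distr_radial_sqrt_distr_radial_square)
    with \<mu> show "\<mu> \<in> (\<lambda>\<nu>. distr \<nu> borel radial_sqrt) ` levy_measures_1"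
      using distr_radial_square_levy_measures_1 by blast
  qed
qed

theorem proposition2p10:
  shows "A1 ` (levy_measures_1 :: ('a::euclidean_space) measure set) = A2 ` (levy_measures_2 :: 'a measure set)"
proof -
  have "A1 ` (levy_measures_1 :: 'a measure set) = (\<lambda>\<nu>. A2 (distr \<nu> borel radial_sqrt)) ` levy_measures_1"
    by (rule image_cong) (simp_all add: levy_measures_1_def A1_eq_A2_distr_radial_sqrt)
  also have "\<dots> = A2 ` levy_measures_2"
    by (simp add: levy_measures_2_eq_image_distr_radial_sqrt image_image)
  finally show ?thesis .
qed

end
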